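(* Let $q \equiv 1 \pmod{14}$ be a prime power, let $\rho$ be a primitive element of $\mathbb F_q$, and let $g,h \in (\mathbb Z_2^3)^*$ with $g\neq h$. Then (i) $c^7_q\big(\Psi_1(h-g)-\Psi_1(g),\ \Psi_1(h)-\Psi_1(g)\big) = c^7_q(1,5)$; (ii) $c^7_q\big(\Psi_2(h-g)-\Psi_2(g),\ \Psi_2(h)-\Psi_2(g)\big) = c^7_q(1,3)$.
   Context: $(\mathbb Z_2^3)^* = \mathbb Z_2^3\setminus\{0\}$; elements are written $(x_2,x_1,x_0)$ and $\hat x\in\{0,1\}$ denotes the integer representative of $x\in\mathbb Z_2$. Define $\phi(x_2,x_1,x_0) = \hat x_0 + 2\hat x_1 + 4\hat x_2 \pmod 7$, $\operatorname{wt}(x_2,x_1,x_0) = \hat x_0+\hat x_1+\hat x_2$, $\sigma_+(x_2,x_1,x_0) = (x_1,x_0,x_2)$, $\sigma_-(x_2,x_1,x_0) = (x_0,x_2,x_1)$. Define $\Psi_1,\Psi_2 : (\mathbb Z_2^3)^* \to \mathbb Z_7$ by $\Psi_1(\mathbf x) = \phi(\sigma_+(\mathbf x))$ if $\operatorname{wt}(\mathbf x)$ is odd and $\phi(\sigma_-(\mathbf x))$ if even; $\Psi_2(\mathbf x) = \phi(\sigma_+(\mathbf x)+\mathbf x)$ if $\operatorname{wt}(\mathbf x)$ is odd and $\phi((1,1,1)+\mathbf x)$ if even. Cyclotomic numbers: write $q = 14r+1$; for $i\in\mathbb Z_7$, $C^7_q(i)=\{\rho^{7j+i}: 0\le j\le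 2r-1\}$, and $c^7_q(a,b)=|(C^7_q(a)+1)\cap C^7_q(b)|$ for $a,b\in\mathbb Z_7$. *)

theory Defs
  imports Main
begin

text \<open>Elements of Z_2^3 are triples (x2, x1, x0) of booleans (True = 1).\<close>
type_synonym z23 = "bool \<times> bool \<times> bool"

definition zero23 :: z23 where "zero23 = (False, False, False)"

definition bval :: "bool \<Rightarrow> int" where "bval b = (if b then 1 else 0)"

fun add23 :: "z23 \<Rightarrow> z23 \<Rightarrow> z23" where
  "add23 (a2, a1, a0) (b2, b1, b0) = (a2 \<noteq> b2, a1 \<noteq> b1, a0 \<noteq> b0)"

fun neg23 :: "z23 \<Rightarrow> z23" where
  "neg23 (a2, a1, a0) = (a2, a1, a0)"

definition sub23 :: "z23 \<Rightarrow> z23 \<Rightarrow> z23" where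
  "sub23 x y = add23 x (neg23 y)"

text \<open>Values in Z_7 are represented by integers in {0..6}.\<close>
fun phi :: "z23 \<Rightarrow> int" where
  "phi (x2, x1, x0) = (bval x0 + 2 * bval x1 + 4 * bval x2) mod 7"

fun wt :: "z23 \<Rightarrow> int" where
  "wt (x2, x1, x0) = bval x0 + bval x1 + bval x2"

fun sigma_plus :: "z23 \<Rightarrow> z23" where
  "sigma_plus (x2, x1, x0) = (x1, x0, x2)"

fun sigma_minus :: "z23 \<Rightarrow> z23" where
  "sigma_minus (x2, x1, x0) = (x0, x2, x1)"

definition Psi1 :: "z23 \<Rightarrow> int" where
  "Psi1 x = (if odd (wt x) then phi (sigma_plus x) else phi (sigma_minus x))"

definition Psi2 :: "z23 \<Rightarrow> int" where
  "Psi2 x = (if odd (wt x) then phi (add23 (sigma_plus x) x)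
             else phi (add23 (True, True, True) x))"

definition primitive_element :: "'a::{finite,field} \<Rightarrow> bool" where
  "primitive_element \<rho> \<longleftrightarrow> \<rho> \<noteq> 0 \<and> (\<forall>x. x \<noteq> 0 \<longrightarrow> (\<exists>k::nat. x = \<rho> ^ k))"

text \<open>Cyclotomic class C^7_q(i), q = CARD('a) = 14 r + 1; index i taken modulo 7.\<close>
definition cyc_class :: "'a::{finite,field} \<Rightarrow> int \<Rightarrow> 'a set" where
  "cyc_class \<rho> i =
     {\<rho> ^ (7 * j + nat (i mod 7)) | j. j < 2 * ((card (UNIV :: 'a set) - 1) div 14)}"

definition cyc_num :: "'a::{finite,field} \<Rightarrow> int \<Rightarrow> int \<Rightarrow> nat" where
  "cyc_num \<rho> a b = card ((\<lambda>x. x + 1) ` cyc_class \<rho> a \<inter> cyc_class \<rho> b)"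

end

theory Submission
  imports Defs
begin

(* The classes C(i) are the cosets of the subgroup of seventh powers in the multiplicative
   group of F_q, so c(a,b) counts the y with y - 1 \<in> C(a) and y \<in> C(b) and depends only on
   a, b mod 7. The substitution y \<mapsto> 1 - y turns c(a,b) into c(b,a), because -1 is a seventh
   power when (q - 1)/7 is even, and y \<mapsto> y/(y - 1) turns it into c(-a, b - a). Hence c is
   constant on the orbits (of size at most six) of these two maps acting on pairs of residues,
   and checking the 42 pairs (g,h) shows that the Psi-differences always lie in the orbit of
   (1,5), resp. (1,3). *)

lemma finite_field_power_card_minus_one:
  fixes x :: "'a::{finite,field}"
  assumes "x \<noteq> 0"
  shows "x ^ (card (UNIV :: 'a set) - 1) = 1"
proof -
  have "(\<Prod>y\<in>UNIV-{0}. x * y) = (\<Prod>y\<in>UNIV-{0::'a}. y)"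
    by (rule prod.reindex_bij_witness[of _ "\<lambda>y. y / x" "\<lambda>y. x * y"]) (use assms in auto)
  moreover have "(\<Prod>y\<in>UNIV-{0}. x * y) = x ^ card (UNIV - {0::'a}) * (\<Prod>y\<in>UNIV-{0::'a}. y)"
    by (simp add: prod.distrib)
  moreover have "(\<Prod>y\<in>UNIV-{0::'a}. y) \<noteq> 0"
    by simp
  ultimately show ?thesis
    by (simp add: card_Diff_singleton)
qed

lemma finite_field_card_minus_one_pos: "card (UNIV :: 'a::{finite,field} set) - 1 > 0"
proof -
  have "card {0::'a, 1} \<le> card (UNIV :: 'a set)"
    by (rule card_mono) simp_all
  moreover have "card {0::'a, 1} = 2"
    by simp
  ultimately show ?thesis
    by linarith
qed

lemma primitive_element_nonzero: "primitive_element \<rho> \<Longrightarrow> \<rho> \<noteq> 0"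
  unfolding primitive_element_def by simp

lemma finite_field_power_mod_card_minus_one:
  fixes x :: "'a::{finite,field}"
  assumes "x \<noteq> 0"
  shows "x ^ k = x ^ (k mod (card (UNIV :: 'a set) - 1))"
proof -
  let ?n = "card (UNIV :: 'a set) - 1"
  have "x ^ k = x ^ (?n * (k div ?n) + k mod ?n)"
    by simp
  also have "\<dots> = (x ^ ?n) ^ (k div ?n) * x ^ (k mod ?n)"
    by (simp only: power_add power_mult)
  finally show ?thesis
    using finite_field_power_card_minus_one[OF assms] by simp
qed

lemma primitive_element_power_eq_iff:
  fixes \<rho> :: "'a::{finite,field}"
  assumes "primitive_element \<rho>"
  shows "\<rho> ^ k = \<rho> ^ l \<longleftrightarrow> k mod (card (UNIV :: 'a set) - 1) = l mod (card (UNIV :: 'a set) - 1)"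
proof -
  let ?n = "card (UNIV :: 'a set) - 1"
  have \<rho>: "\<rho> \<noteq> 0"
    using assms by (rule primitive_element_nonzero)
  have "(\<lambda>k. \<rho> ^ k) ` {..<?n} = UNIV - {0}"
  proof
    show "UNIV - {0} \<subseteq> (\<lambda>k. \<rho> ^ k) ` {..<?n}"
    proof
      fix x :: 'a
      assume "x \<in> UNIV - {0}"
      then obtain k where "x = \<rho> ^ k"
        using assms unfolding primitive_element_def by auto
      then have "x = \<rho> ^ (k mod ?n)"
        using finite_field_power_mod_card_minus_one[OF \<rho>] by simp
      moreover have "k mod ?n < ?n"
        using finite_field_card_minus_one_pos[where 'a='a] by simp
      ultimately show "x \<in> (\<lambda>k. \<rho> ^ k) ` {..<?n}"
        by blast
    qed
  qed (use \<rho> in auto)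
  then have "inj_on (\<lambda>k. \<rho> ^ k) {..<?n}"
    by (intro eq_card_imp_inj_on) (simp_all add: card_Diff_singleton)
  moreover have "k mod ?n < ?n" "l mod ?n < ?n"
    using finite_field_card_minus_one_pos[where 'a='a] by simp_all
  ultimately have "\<rho> ^ (k mod ?n) = \<rho> ^ (l mod ?n) \<longleftrightarrow> k mod ?n = l mod ?n"
    by (auto dest: inj_onD)
  then show ?thesis
    using finite_field_power_mod_card_minus_one[OF \<rho>, of k] finite_field_power_mod_card_minus_one[OF \<rho>, of l]
    by simp
qed

lemma primitive_element_power_half:
  fixes \<rho> :: "'a::{finite,field}"
  assumes "primitive_element \<rho>" and "even (card (UNIV :: 'a set) - 1)"
  shows "\<rho> ^ ((card (UNIV :: 'a set) - 1) div 2) = - 1"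
proof -
  let ?n = "card (UNIV :: 'a set) - 1"
  have "(\<rho> ^ (?n div 2)) ^ 2 = \<rho> ^ ?n"
    using assms(2) by (simp flip: power_mult)
  then have "(\<rho> ^ (?n div 2)) ^ 2 = 1"
    using finite_field_power_card_minus_one primitive_element_nonzero[OF assms(1)] by simp
  moreover have "(?n div 2) mod ?n \<noteq> 0 mod ?n"
    using assms(2) finite_field_card_minus_one_pos[where 'a='a] by (elim evenE) auto
  then have "\<rho> ^ (?n div 2) \<noteq> \<rho> ^ 0"
    using primitive_element_power_eq_iff[OF assms(1)] by blast
  ultimately show ?thesis
    by (simp add: power2_eq_1_iff)
qed

definition cyclotomic_class :: "'a::field \<Rightarrow> int \<Rightarrow> int \<Rightarrow> 'a set" where
  "cyclotomic_class \<rho> e i = {\<rho> ^ k | k. int k mod e = i mod e}"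

lemma cyclotomic_class_mod [simp]: "cyclotomic_class \<rho> e (i mod e) = cyclotomic_class \<rho> e i"
  unfolding cyclotomic_class_def by simp

lemma cyclotomic_class_cong: "i mod e = j mod e \<Longrightarrow> cyclotomic_class \<rho> e i = cyclotomic_class \<rho> e j"
  by (metis cyclotomic_class_mod)

lemma cyclotomic_class_nonzero: "\<rho> \<noteq> 0 \<Longrightarrow> x \<in> cyclotomic_class \<rho> e i \<Longrightarrow> x \<noteq> 0"
  unfolding cyclotomic_class_def by auto

lemma one_mem_cyclotomic_class: "1 \<in> cyclotomic_class \<rho> e 0"
  unfolding cyclotomic_class_def by (auto intro!: exI[of _ 0])

lemma mult_mem_cyclotomic_class:
  assumes "x \<in> cyclotomic_class \<rho> e a" and "y \<in> cyclotomic_class \<rho> e b"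
  shows "x * y \<in> cyclotomic_class \<rho> e (a + b)"
proof -
  obtain k l where "x = \<rho> ^ k" "int k mod e = a mod e" and "y = \<rho> ^ l" "int l mod e = b mod e"
    using assms unfolding cyclotomic_class_def by blast
  moreover have "(int k + int l) mod e = (a + b) mod e"
    using calculation(2,4) by (rule mod_add_cong)
  ultimately have "x * y = \<rho> ^ (k + l)" and "int (k + l) mod e = (a + b) mod e"
    by (simp_all add: power_add)
  then show ?thesis
    unfolding cyclotomic_class_def by blast
qed

lemma power_mem_cyclotomic_class:
  "x \<in> cyclotomic_class \<rho> e a \<Longrightarrow> x ^ m \<in> cyclotomic_class \<rho> e (int m * a)"
proof (induction m)
  case 0
  show ?case
    using one_mem_cyclotomic_class by simp
next
  case (Suc m)
  then have "x * x ^ m \<in> cyclotomic_class \<rho> e (a + int m * a)"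
    by (intro mult_mem_cyclotomic_class)
  then show ?case
    by (simp add: algebra_simps)
qed

lemma inverse_mem_cyclotomic_class:
  fixes \<rho> :: "'a::{finite,field}"
  assumes "primitive_element \<rho>" and "e dvd int (card (UNIV :: 'a set) - 1)"
    and x: "x \<in> cyclotomic_class \<rho> e a"
  shows "inverse x \<in> cyclotomic_class \<rho> e (- a)"
proof -
  let ?n = "card (UNIV :: 'a set) - 1"
  have "x \<noteq> 0"
    using primitive_element_nonzero[OF assms(1)] x by (rule cyclotomic_class_nonzero)
  have "x * x ^ (?n - 1) = x ^ Suc (?n - 1)"
    by simp
  also have "Suc (?n - 1) = ?n"
    using finite_field_card_minus_one_pos[where 'a='a] by linarith
  finally have "x * x ^ (?n - 1) = 1"
    using finite_field_power_card_minus_one[OF \<open>x \<noteq> 0\<close>] by simp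
  then have "inverse x = x ^ (?n - 1)"
    by (rule inverse_unique)
  moreover have "(int (?n - 1) * a) mod e = (- a) mod e"
  proof -
    have "int (?n - 1) * a = int ?n * a - a"
      using finite_field_card_minus_one_pos[where 'a='a] by (simp add: of_nat_diff algebra_simps)
    moreover have "(int ?n * a) mod e = 0"
      using assms(2) by simp
    ultimately show ?thesis
      by (metis diff_0 mod_0 mod_diff_cong)
  qed
  ultimately show ?thesis
    using power_mem_cyclotomic_class[OF x, of "?n - 1"] cyclotomic_class_cong by metis
qed

lemma minus_one_mem_cyclotomic_class:
  fixes \<rho> :: "'a::{finite,field}"
  assumes "primitive_element \<rho>" and "2 * e dvd int (card (UNIV :: 'a set) - 1)"
  shows "- 1 \<in> cyclotomic_class \<rho> e 0"
proof -
  let ?n = "card (UNIV :: 'a set) - 1"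
  obtain t where t: "int ?n = 2 * e * t"
    using assms(2) by blast
  then have "even ?n"
    by (metis dvd_triv_left even_of_nat mult.assoc)
  moreover have "int (?n div 2) = e * t"
    using t by (simp add: zdiv_int[symmetric])
  ultimately have "- 1 = \<rho> ^ (?n div 2)" and "int (?n div 2) mod e = 0 mod e"
    using primitive_element_power_half[OF assms(1)] by simp_all
  then show ?thesis
    unfolding cyclotomic_class_def by blast
qed

definition cyclotomic_number :: "'a::field \<Rightarrow> int \<Rightarrow> int \<Rightarrow> int \<Rightarrow> nat" where
  "cyclotomic_number \<rho> e a b = card {y. y - 1 \<in> cyclotomic_class \<rho> e a \<and> y \<in> cyclotomic_class \<rho> e b}"

lemma cyclotomic_number_mod:
  "cyclotomic_number \<rho> e a b = cyclotomic_number \<rho> e (a mod e) (b mod e)"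
  unfolding cyclotomic_number_def by simp

lemma cyclotomic_number_swap:
  fixes \<rho> :: "'a::{finite,field}"
  assumes "primitive_element \<rho>" and "2 * e dvd int (card (UNIV :: 'a set) - 1)"
  shows "cyclotomic_number \<rho> e a b = cyclotomic_number \<rho> e b a"
proof -
  have le: "cyclotomic_number \<rho> e a b \<le> cyclotomic_number \<rho> e b a" for a b
    unfolding cyclotomic_number_def
  proof (rule card_inj_on_le[of "\<lambda>y. 1 - y"])
    show "(\<lambda>y. 1 - y) ` {y. y - 1 \<in> cyclotomic_class \<rho> e a \<and> y \<in> cyclotomic_class \<rho> e b}
        \<subseteq> {y. y - 1 \<in> cyclotomic_class \<rho> e b \<and> y \<in> cyclotomic_class \<rho> e a}"
      using mult_mem_cyclotomic_class[OF minus_one_mem_cyclotomic_class[OF assms]] by force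
  qed (auto simp: inj_on_def)
  show ?thesis
    using le[of a b] le[of b a] by simp
qed

lemma cyclotomic_number_neg:
  fixes \<rho> :: "'a::{finite,field}"
  assumes "primitive_element \<rho>" and "e dvd int (card (UNIV :: 'a set) - 1)"
  shows "cyclotomic_number \<rho> e a b = cyclotomic_number \<rho> e (- a) (b - a)"
proof -
  have le: "cyclotomic_number \<rho> e a b \<le> cyclotomic_number \<rho> e (- a) (b - a)" for a b
    unfolding cyclotomic_number_def
  proof (rule card_inj_on_le[of "\<lambda>y. 1 + inverse (y - 1)"])
    show "(\<lambda>y. 1 + inverse (y - 1)) ` {y. y - 1 \<in> cyclotomic_class \<rho> e a \<and> y \<in> cyclotomic_class \<rho> e b}
        \<subseteq> {y. y - 1 \<in> cyclotomic_class \<rho> e (- a) \<and> y \<in> cyclotomic_class \<rho> e (b - a)}"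
    proof clarify
      fix y
      assume a: "y - 1 \<in> cyclotomic_class \<rho> e a" and b: "y \<in> cyclotomic_class \<rho> e b"
      have inv: "inverse (y - 1) \<in> cyclotomic_class \<rho> e (- a)"
        using assms a by (rule inverse_mem_cyclotomic_class)
      have "y \<noteq> 1"
        using cyclotomic_class_nonzero[OF primitive_element_nonzero[OF assms(1)] a] by simp
      then have "1 + inverse (y - 1) = y * inverse (y - 1)"
        by (simp add: field_simps)
      then have "1 + inverse (y - 1) \<in> cyclotomic_class \<rho> e (b - a)"
        using mult_mem_cyclotomic_class[OF b inv] by simp
      then show "1 + inverse (y - 1) - 1 \<in> cyclotomic_class \<rho> e (- a)
          \<and> 1 + inverse (y - 1) \<in> cyclotomic_class \<rho> e (b - a)"
        using inv by simp
    qed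
  qed (auto simp: inj_on_def)
  show ?thesis
    using le[of a b] le[of "- a" "b - a"] by simp
qed

definition cyclotomic_orbit :: "int \<Rightarrow> int \<Rightarrow> int \<Rightarrow> (int \<times> int) set" where
  "cyclotomic_orbit e x y = (\<lambda>(u, v). (u mod e, v mod e)) `
     {(x, y), (y, x), (- x, y - x), (y - x, - x), (- y, x - y), (x - y, - y)}"

lemma cyclotomic_number_orbit:
  fixes \<rho> :: "'a::{finite,field}"
  assumes "primitive_element \<rho>" and "2 * e dvd int (card (UNIV :: 'a set) - 1)"
    and "(a mod e, b mod e) \<in> cyclotomic_orbit e x y"
  shows "cyclotomic_number \<rho> e a b = cyclotomic_number \<rho> e x y"
proof -
  have e: "e dvd int (card (UNIV :: 'a set) - 1)"
    using assms(2) by (rule dvd_mult_right)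
  note swap = cyclotomic_number_swap[OF assms(1,2)] and neg = cyclotomic_number_neg[OF assms(1) e]
  obtain u v where uv: "(u, v) \<in> {(x, y), (y, x), (- x, y - x), (y - x, - x), (- y, x - y), (x - y, - y)}"
    and "a mod e = u mod e" "b mod e = v mod e"
    using assms(3) unfolding cyclotomic_orbit_def by auto
  then have "cyclotomic_number \<rho> e a b = cyclotomic_number \<rho> e u v"
    by (metis cyclotomic_number_mod)
  also have "\<dots> = cyclotomic_number \<rho> e x y"
    using uv
  proof (elim insertE emptyE; simp only: prod.inject; elim conjE; hypsubst)
    show "cyclotomic_number \<rho> e y x = cyclotomic_number \<rho> e x y"
      by (rule swap)
    show "cyclotomic_number \<rho> e (- x) (y - x) = cyclotomic_number \<rho> e x y"
      by (rule neg[symmetric])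
    show "cyclotomic_number \<rho> e (y - x) (- x) = cyclotomic_number \<rho> e x y"
      by (simp add: swap[of "y - x" "- x"] neg[of x y])
    show "cyclotomic_number \<rho> e (- y) (x - y) = cyclotomic_number \<rho> e x y"
      by (simp add: swap[of x y] neg[of y x])
    show "cyclotomic_number \<rho> e (x - y) (- y) = cyclotomic_number \<rho> e x y"
      by (simp add: swap[of "x - y" "- y"] swap[of x y] neg[of y x])
  qed
  finally show ?thesis .
qed

lemma cyc_class_eq_cyclotomic_class:
  fixes \<rho> :: "'a::{finite,field}"
  assumes "card (UNIV :: 'a set) mod 14 = 1" and "primitive_element \<rho>"
  shows "cyc_class \<rho> i = cyclotomic_class \<rho> 7 i"
proof
  show "cyc_class \<rho> i \<subseteq> cyclotomic_class \<rho> 7 i"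
    unfolding cyc_class_def cyclotomic_class_def by auto
  show "cyclotomic_class \<rho> 7 i \<subseteq> cyc_class \<rho> i"
  proof
    let ?n = "card (UNIV :: 'a set) - 1"
    fix x
    assume "x \<in> cyclotomic_class \<rho> 7 i"
    then obtain k where x: "x = \<rho> ^ k" and k: "int k mod 7 = i mod 7"
      unfolding cyclotomic_class_def by auto
    have "14 dvd ?n"
      using dvd_minus_mod[of 14 "card (UNIV :: 'a set)"] assms(1) by simp
    then have n: "?n = 14 * (?n div 14)"
      by simp
    have "7 dvd ?n"
      using \<open>14 dvd ?n\<close> by (rule dvd_trans[rotated]) simp
    have "int (k mod 7) = i mod 7"
      using k by (simp add: of_nat_mod)
    then have "k mod 7 = nat (i mod 7)"
      by (metis nat_int)
    moreover have "(k mod ?n) mod 7 = k mod 7"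
      using \<open>7 dvd ?n\<close> by (rule mod_mod_cancel)
    ultimately have decomp: "k mod ?n = 7 * (k mod ?n div 7) + nat (i mod 7)"
      using mult_div_mod_eq[of 7 "k mod ?n"] by simp
    have "k mod ?n < ?n"
      using finite_field_card_minus_one_pos[where 'a='a] by simp
    then have "k mod ?n div 7 < 2 * (?n div 14)"
      using n by linarith
    moreover have "x = \<rho> ^ (k mod ?n)"
      using x finite_field_power_mod_card_minus_one[OF primitive_element_nonzero[OF assms(2)]] by simp
    ultimately show "x \<in> cyc_class \<rho> i"
      unfolding cyc_class_def using decomp by (metis (mono_tags, lifting) mem_Collect_eq)
  qed
qed

lemma cyc_num_eq_cyclotomic_number:
  fixes \<rho> :: "'a::{finite,field}"
  assumes "card (UNIV :: 'a set) mod 14 = 1" and "primitive_element \<rho>"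
  shows "cyc_num \<rho> a b = cyclotomic_number \<rho> 7 a b"
proof -
  have "(\<lambda>x. x + 1) ` cyclotomic_class \<rho> 7 a = {y. y - 1 \<in> cyclotomic_class \<rho> 7 a}"
    by (auto simp: image_iff) (metis diff_add_cancel)
  then show ?thesis
    unfolding cyc_num_def cyclotomic_number_def cyc_class_eq_cyclotomic_class[OF assms]
    by (simp add: Collect_conj_eq)
qed

lemma Psi1_differences_orbit:
  assumes "g \<noteq> zero23" and "h \<noteq> zero23" and "g \<noteq> h"
  shows "((Psi1 (sub23 h g) - Psi1 g) mod 7, (Psi1 h - Psi1 g) mod 7) \<in> cyclotomic_orbit 7 1 5"
proof -
  have orbit: "cyclotomic_orbit 7 1 5 = {(1, 5), (5, 1), (6, 4), (4, 6), (2, 3), (3, 2)}"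
    unfolding cyclotomic_orbit_def by simp
  obtain g2 g1 g0 h2 h1 h0 where "g = (g2, g1, g0)" "h = (h2, h1, h0)"
    by (cases g, cases h) auto
  then show ?thesis
    using assms unfolding orbit
    by (cases g2; cases g1; cases g0; cases h2; cases h1; cases h0)
       (simp_all add: Psi1_def sub23_def zero23_def bval_def)
qed

lemma Psi2_differences_orbit:
  assumes "g \<noteq> zero23" and "h \<noteq> zero23" and "g \<noteq> h"
  shows "((Psi2 (sub23 h g) - Psi2 g) mod 7, (Psi2 h - Psi2 g) mod 7) \<in> cyclotomic_orbit 7 1 3"
proof -
  have orbit: "cyclotomic_orbit 7 1 3 = {(1, 3), (3, 1), (6, 2), (2, 6), (4, 5), (5, 4)}"
    unfolding cyclotomic_orbit_def by simp
  obtain g2 g1 g0 h2 h1 h0 where "g = (g2, g1, g0)" "h = (h2, h1, h0)"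
    by (cases g, cases h) auto
  then show ?thesis
    using assms unfolding orbit
    by (cases g2; cases g1; cases g0; cases h2; cases h1; cases h0)
       (simp_all add: Psi2_def sub23_def zero23_def bval_def)
qed

theorem proposition3p2:
  fixes \<rho> :: "'a::{finite,field}" and g h :: z23
  assumes "card (UNIV :: 'a set) mod 14 = 1"
    and "primitive_element \<rho>"
    and "g \<noteq> zero23" and "h \<noteq> zero23" and "g \<noteq> h"
  shows "cyc_num \<rho> (Psi1 (sub23 h g) - Psi1 g) (Psi1 h - Psi1 g) = cyc_num \<rho> 1 5
         \<and> cyc_num \<rho> (Psi2 (sub23 h g) - Psi2 g) (Psi2 h - Psi2 g) = cyc_num \<rho> 1 3"
proof -
  have "14 dvd card (UNIV :: 'a set) - 1"
    using dvd_minus_mod[of 14 "card (UNIV :: 'a set)"] assms(1) by simp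
  then have "2 * 7 dvd int (card (UNIV :: 'a set) - 1)"
    using int_dvd_int_iff[of 14] by simp
  note orbit = cyclotomic_number_orbit[OF assms(2) this]
  show ?thesis
    unfolding cyc_num_eq_cyclotomic_number[OF assms(1,2)]
    using orbit[OF Psi1_differences_orbit] orbit[OF Psi2_differences_orbit] assms(3-5) by simp
qed

end
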